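(* Consider the Markov decision process with state space $\mathcal X=\{e\}$, action set $\mathcal A_e=\{0,1\}$, transitions $P(e,0,e)=P(e,1,e)=1$, and reward laws $S(e,0,e,\cdot)=\delta_0$, $S(e,1,e,\cdot)=\delta_1$. If $\gamma\in(1/2,1)$, then one can choose the parameters of Algorithm 1 (the deterministic initial function $\hat Q^0$, the initial laws $\nu_k$ and the learning rates $\alpha_k$), with $\varepsilon_k(e)=0$ for all $k\ge0$, such that almost surely, for both $a\in\{0,1\}$, $\sum_{k\ge1}\alpha_k(e,a)\mathbf 1_{\{\tau^{k+1}_{e,a}<\infty\}}=\infty$ and $\sum_{k\ge1}(\alpha_k(e,a))^2\mathbf 1_{\{\tau^{k+1}_{e,a}<\infty\}}<\infty$ (and trivially $\lim_k\varepsilon_k(e)=0$), but $\lim_{k\to\infty}V_{\hat\pi^k}(e)$ almost surely does not exist.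
   Context: General setting: $\mathcal X$ finite state space, finite action sets $\mathcal A_x$, $\mathcal Z=\{(x,a):x\in\mathcal X,a\in\mathcal A_x\}$, transition laws $P(x,a,\cdot)$ on $\mathcal X$, reward laws $S(x,a,y,\cdot)$ on $\mathbb R$ with finite second moment, discount $\gamma\in[0,1)$. For an SM policy $\pi$ (a family of probability measures $\pi(x,\cdot)$ on $\mathcal A_x$) and $x\in\mathcal X$: $X_0=x$, $A_t\sim\pi(X_t,\cdot)$, $X_{t+1}\sim P(X_t,A_t,\cdot)$, and conditionally on the state-action process the rewards $R_{t+1}\sim S(X_t,A_t,X_{t+1},\cdot)$ are independent; $V_\pi(x)=\mathbb E_{x,\pi}[\sum_{t\ge0}\gamma^tR_{t+1}]$. Algorithm 1. Fix a deterministic $\hat Q^0:\mathcal Z\to\mathbb R$. For $k\ge0$, given episodes $i=1,\dots,k$ of the form $(X^i_0,A^i_0,X^i_1,R^i_1,A^i_1,\dots)$, let $\mathcal F^k$ be the $\sigma$-field they generate ($\mathcal F^0$ trivial) and $\mathcal G^i_n=\sigma(X^i_0,A^i_0,X^i_1,R^i_1,A^i_1,\dots,X^i_n,R^i_n,A^i_n)$; suppose $\hat Q^k$ is $\mathcal F^k$-measurable. For some $\mathcal F^k$-measurable $\varepsilon_k:\mathcal X\to[0,1]$ let $\hat\pi^k(x,a)=\frac{\varepsilon_k(x)}{|\mathcal A_x|}+\mathbf 1_{\{a\in\arg\max\hat Q^k(x,\cdot)\}}\frac{1-\varepsilon_k(x)}{|\arg\max\hat Q^k(x,\cdot)|}$.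 For some $\mathcal F^k$-measurable probability $\nu_k$ on $\mathcal Z$, build episode $k+1$ with $(X^{k+1}_0,A^{k+1}_0)\sim\nu_k$ and then policy $\hat\pi^k$. Let $\tau^{k+1}_{x,a}=\inf\{t\ge0:(X^{k+1}_t,A^{k+1}_t)=(x,a)\}$ ($\inf\emptyset=\infty$), $G^{k+1}_{x,a}=\sum_{t\ge0}\gamma^tR^{k+1}_{\tau^{k+1}_{x,a}+t+1}$ (zero if $\tau^{k+1}_{x,a}=\infty$), and for some $\mathcal F^k\vee\mathcal G^{k+1}_{\tau^{k+1}_{x,a}}$-measurable $\alpha_k(x,a)\in[0,1]$ set $\hat Q^{k+1}(x,a)=(1-\alpha_k(x,a)\mathbf 1_{\{\tau^{k+1}_{x,a}<\infty\}})\hat Q^k(x,a)+\alpha_k(x,a)\mathbf 1_{\{\tau^{k+1}_{x,a}<\infty\}}G^{k+1}_{x,a}$. *)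

theory Defs
  imports "HOL-Probability.Probability"
begin

(* The concrete MDP: single state e (left implicit), actions A_e = {0,1} encoded as
   bool (False = action 0, True = action 1), P(e,a,e) = 1, S(e,a,e,.) = delta_a. *)

text \<open>Reward value of action a (the reward law S(e,a,e,.) is the Dirac mass at this value).\<close>
definition rew :: "bool \<Rightarrow> real" where
  "rew a = (if a then 1 else 0)"

text \<open>Value V_pi(e) of an SM policy pi (pi a = pi(e,a)): X_t = e always, actions A_t i.i.d. with
  law pi(e,.), rewards R_{t+1} = rew A_t; V_pi(e) = E[sum_t gamma^t R_{t+1}].\<close>
definition V :: "real \<Rightarrow> (bool \<Rightarrow> real) \<Rightarrow> real" where
  "V \<gamma> \<pi> = (\<integral>\<omega>. (\<Sum>t. \<gamma> ^ t * rew (\<omega> !! t))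
               \<partial>stream_space (measure_pmf (bernoulli_pmf (\<pi> True))))"

definition argmaxQ :: "(bool \<Rightarrow> real) \<Rightarrow> bool set" where
  "argmaxQ Q = {b. \<forall>c. Q c \<le> Q b}"

definition pihat :: "real \<Rightarrow> (bool \<Rightarrow> real) \<Rightarrow> bool \<Rightarrow> real" where
  "pihat \<epsilon> Q a = \<epsilon> / real (card (UNIV :: bool set))
     + (if a \<in> argmaxQ Q then (1 - \<epsilon>) / real (card (argmaxQ Q)) else 0)"

text \<open>Episode i (i >= 1) is given by actions A i t (t >= 0) and rewards R i t (t >= 1).
  hits = [tau^i_{e,a} < infinity], tau = first visit time, Gret = return G^i_{e,a}.\<close>
definition hits :: "(nat \<Rightarrow> nat \<Rightarrow> 'w \<Rightarrow> bool) \<Rightarrow> nat \<Rightarrow> bool \<Rightarrow> 'w \<Rightarrow> bool" where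
  "hits A i a \<omega> = (\<exists>t. A i t \<omega> = a)"

definition tau :: "(nat \<Rightarrow> nat \<Rightarrow> 'w \<Rightarrow> bool) \<Rightarrow> nat \<Rightarrow> bool \<Rightarrow> 'w \<Rightarrow> nat" where
  "tau A i a \<omega> = (LEAST t. A i t \<omega> = a)"

definition visit :: "(nat \<Rightarrow> nat \<Rightarrow> 'w \<Rightarrow> bool) \<Rightarrow> nat \<Rightarrow> bool \<Rightarrow> 'w \<Rightarrow> real" where
  "visit A i a \<omega> = (if hits A i a \<omega> then 1 else 0)"

definition Gret :: "(nat \<Rightarrow> nat \<Rightarrow> 'w \<Rightarrow> bool) \<Rightarrow> (nat \<Rightarrow> nat \<Rightarrow> 'w \<Rightarrow> real) \<Rightarrow> real
                     \<Rightarrow> nat \<Rightarrow> bool \<Rightarrow> 'w \<Rightarrow> real" where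
  "Gret A R \<gamma> i a \<omega> = (if hits A i a \<omega>
      then (\<Sum>t. \<gamma> ^ t * R i (tau A i a \<omega> + t + 1) \<omega>) else 0)"

text \<open>The iterates Q-hat^k of Algorithm 1 (alpha k a = alpha_k(e,a), episode k+1 = Suc k).\<close>
primrec Qhat :: "(bool \<Rightarrow> real) \<Rightarrow> (nat \<Rightarrow> bool \<Rightarrow> 'w \<Rightarrow> real) \<Rightarrow> (nat \<Rightarrow> nat \<Rightarrow> 'w \<Rightarrow> bool)
                 \<Rightarrow> (nat \<Rightarrow> nat \<Rightarrow> 'w \<Rightarrow> real) \<Rightarrow> real \<Rightarrow> nat \<Rightarrow> 'w \<Rightarrow> bool \<Rightarrow> real" where
  "Qhat Q0 \<alpha> A R \<gamma> 0 \<omega> a = Q0 a"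
| "Qhat Q0 \<alpha> A R \<gamma> (Suc k) \<omega> a =
     (1 - \<alpha> k a \<omega> * visit A (Suc k) a \<omega>) * Qhat Q0 \<alpha> A R \<gamma> k \<omega> a
     + \<alpha> k a \<omega> * visit A (Suc k) a \<omega> * Gret A R \<gamma> (Suc k) a \<omega>"

definition gen :: "'w measure \<Rightarrow> ('w \<Rightarrow> real) set \<Rightarrow> 'w measure" where
  "gen M fs = sigma (space M) (\<Union>f\<in>fs. {f -` B \<inter> space M | B. B \<in> sets borel})"

definition actv :: "(nat \<Rightarrow> nat \<Rightarrow> 'w \<Rightarrow> bool) \<Rightarrow> nat \<Rightarrow> nat \<Rightarrow> 'w \<Rightarrow> real" where
  "actv A i t = (\<lambda>\<omega>. if A i t \<omega> then 1 else 0)"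

text \<open>Generators of F^k: episodes 1..k (the states are constant and generate nothing).\<close>
definition Fgen :: "(nat \<Rightarrow> nat \<Rightarrow> 'w \<Rightarrow> bool) \<Rightarrow> (nat \<Rightarrow> nat \<Rightarrow> 'w \<Rightarrow> real) \<Rightarrow> nat \<Rightarrow> ('w \<Rightarrow> real) set" where
  "Fgen A R k = {actv A i t | i t. 1 \<le> i \<and> i \<le> k} \<union> {R i t | i t. 1 \<le> i \<and> i \<le> k \<and> 1 \<le> t}"

text \<open>F^k \<or> sigma(X^{k+1}_0, A^{k+1}_0, ..., A^{k+1}_{t-1}, X^{k+1}_t, R^{k+1}_1..R^{k+1}_t):
  the information available when A^{k+1}_t is drawn.\<close>
definition Hgen :: "(nat \<Rightarrow> nat \<Rightarrow> 'w \<Rightarrow> bool) \<Rightarrow> (nat \<Rightarrow> nat \<Rightarrow> 'w \<Rightarrow> real) \<Rightarrow> nat \<Rightarrow> nat \<Rightarrow> ('w \<Rightarrow> real) set" where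
  "Hgen A R k t = Fgen A R k \<union> {actv A (Suc k) s | s. s < t} \<union> {R (Suc k) s | s. 1 \<le> s \<and> s \<le> t}"

definition Ggen :: "(nat \<Rightarrow> nat \<Rightarrow> 'w \<Rightarrow> bool) \<Rightarrow> (nat \<Rightarrow> nat \<Rightarrow> 'w \<Rightarrow> real) \<Rightarrow> nat \<Rightarrow> nat \<Rightarrow> ('w \<Rightarrow> real) set" where
  "Ggen A R k n = Fgen A R k \<union> {actv A (Suc k) s | s. s \<le> n} \<union> {R (Suc k) s | s. 1 \<le> s \<and> s \<le> n}"

definition Ginf :: "(nat \<Rightarrow> nat \<Rightarrow> 'w \<Rightarrow> bool) \<Rightarrow> (nat \<Rightarrow> nat \<Rightarrow> 'w \<Rightarrow> real) \<Rightarrow> nat \<Rightarrow> ('w \<Rightarrow> real) set" where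
  "Ginf A R k = Fgen A R k \<union> {actv A (Suc k) s | s. True} \<union> {R (Suc k) s | s. 1 \<le> s}"

text \<open>M, A, R realize Algorithm 1 on the MDP above with discount gamma, initial function Q0,
  initial laws nu_k = (1 - p k) delta_{(e,0)} + p k delta_{(e,1)}, learning rates alpha and
  exploration rates eps.\<close>
definition algorithm1 ::
  "'w measure \<Rightarrow> (nat \<Rightarrow> nat \<Rightarrow> 'w \<Rightarrow> bool) \<Rightarrow> (nat \<Rightarrow> nat \<Rightarrow> 'w \<Rightarrow> real) \<Rightarrow> real
   \<Rightarrow> (bool \<Rightarrow> real) \<Rightarrow> (nat \<Rightarrow> 'w \<Rightarrow> real) \<Rightarrow> (nat \<Rightarrow> bool \<Rightarrow> 'w \<Rightarrow> real) \<Rightarrow> (nat \<Rightarrow> 'w \<Rightarrow> real) \<Rightarrow> bool"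
where
  "algorithm1 M A R \<gamma> Q0 p \<alpha> eps \<longleftrightarrow>
     prob_space M
   \<and> (\<forall>i t. 1 \<le> i \<longrightarrow> A i t \<in> measurable M (count_space UNIV))
   \<and> (\<forall>i t. 1 \<le> i \<longrightarrow> R i t \<in> borel_measurable M)
   \<comment> \<open>exploration rates eps_k: F^k-measurable, values in [0,1]\<close>
   \<and> (\<forall>k. eps k \<in> borel_measurable (gen M (Fgen A R k)))
   \<and> (\<forall>k. \<forall>\<omega>\<in>space M. 0 \<le> eps k \<omega> \<and> eps k \<omega> \<le> 1)
   \<comment> \<open>initial laws nu_k: F^k-measurable probabilities on Z\<close>
   \<and> (\<forall>k. p k \<in> borel_measurable (gen M (Fgen A R k)))
   \<and> (\<forall>k. \<forall>\<omega>\<in>space M. 0 \<le> p k \<omega> \<and> p k \<omega> \<le> 1)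
   \<comment> \<open>learning rates alpha_k(e,a): F^k \<or> G^{k+1}_{tau}-measurable, values in [0,1]\<close>
   \<and> (\<forall>k a. \<alpha> k a \<in> borel_measurable (gen M (Ginf A R k)))
   \<and> (\<forall>k a n. (\<lambda>\<omega>. indicator {\<omega>. hits A (Suc k) a \<omega> \<and> tau A (Suc k) a \<omega> = n} \<omega> * \<alpha> k a \<omega>)
                \<in> borel_measurable (gen M (Ggen A R k n)))
   \<and> (\<forall>k a. \<forall>\<omega>\<in>space M. 0 \<le> \<alpha> k a \<omega> \<and> \<alpha> k a \<omega> \<le> 1)
   \<comment> \<open>(X^{k+1}_0, A^{k+1}_0) ~ nu_k conditionally on F^k\<close>
   \<and> (\<forall>k b. \<forall>E\<in>sets (gen M (Fgen A R k)).
        measure M (E \<inter> {\<omega>\<in>space M. A (Suc k) 0 \<omega> = b})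
          = (\<integral>\<omega>. indicator E \<omega> * (if b then p k \<omega> else 1 - p k \<omega>) \<partial>M))
   \<comment> \<open>A^{k+1}_t ~ pihat^k(X^{k+1}_t, .) conditionally on the past, t \<ge> 1\<close>
   \<and> (\<forall>k t b. 1 \<le> t \<longrightarrow> (\<forall>E\<in>sets (gen M (Hgen A R k t)).
        measure M (E \<inter> {\<omega>\<in>space M. A (Suc k) t \<omega> = b})
          = (\<integral>\<omega>. indicator E \<omega> * pihat (eps k \<omega>) (Qhat Q0 \<alpha> A R \<gamma> k \<omega>) b \<partial>M)))
   \<comment> \<open>R^{i}_{t+1} ~ S(e, A^i_t, e, .) = Dirac(rew A^i_t)\<close>
   \<and> (\<forall>i t. 1 \<le> i \<longrightarrow> (AE \<omega> in M. R i (Suc t) \<omega> = rew (A i t \<omega>)))"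

end

theory Submission
  imports Defs
begin

(* With epsilon_k = 0 and nu_k the Dirac mass at (e, odd k), the algorithm runs deterministically:
   episode k+1 takes the non-greedy action once and then the greedy action forever.  Keep
   Q(1) = 1 and steer Q(0) along 1 - h_0, 1 + h_1, 1 - h_2, ... with h_k of order 1/k.  In an
   even episode action 0 is followed by rewards 1 forever, so its return gamma/(1-gamma) exceeds
   1 (this is where gamma > 1/2 enters) and Q(0) can be pushed above 1; in an odd episode its
   return is 0 and Q(0) is pulled below 1.  The learning rates realising these moves are of
   order 1/k, so they satisfy the Robbins-Monro conditions, while the greedy action alternates
   and V of the k-th policy alternates between 1/(1-gamma) and 0. *)

lemma V_deterministic:
  assumes "\<pi> True = rew a" and "\<bar>\<gamma>\<bar> < 1"
  shows "V \<gamma> \<pi> = rew a / (1 - \<gamma>)"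
proof -
  let ?S = "stream_space (measure_pmf (bernoulli_pmf (rew a)))"
  have "pmf (bernoulli_pmf (rew a)) b = (if b = a then 1 else 0)" for b
    by (cases a; cases b) (simp_all add: rew_def)
  then have "set_pmf (bernoulli_pmf (rew a)) = {a}"
    by (auto simp: set_pmf_iff split: if_splits)
  then have "AE x in measure_pmf (bernoulli_pmf (rew a)). x = a"
    by (simp add: AE_measure_pmf_iff)
  then have "AE \<omega> in ?S. stream_all (\<lambda>x. x = a) \<omega>"
    by (rule prob_space.AE_stream_all[OF prob_space_measure_pmf, rotated]) simp
  then have "AE \<omega> in ?S. (\<Sum>t. \<gamma> ^ t * rew (\<omega> !! t)) = (\<Sum>t. \<gamma> ^ t * rew a)"
    by eventually_elim (unfold stream_all_def, simp)
  then have "V \<gamma> \<pi> = (\<integral>\<omega>. (\<Sum>t. \<gamma> ^ t * rew a) \<partial>?S)"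
    unfolding V_def assms(1) by (rule integral_cong_AE[rotated 2]) measurable
  also have "\<dots> = (\<Sum>t. \<gamma> ^ t * rew a)"
    by (simp add: prob_space.prob_space prob_space.prob_space_stream_space prob_space_measure_pmf)
  also have "\<dots> = rew a / (1 - \<gamma>)"
    using assms(2) by (simp add: suminf_mult2[symmetric] suminf_geometric summable_geometric)
  finally show ?thesis .
qed

lemma argmaxQ_eq_singleton:
  assumes "Q (\<not> a) < Q a"
  shows "argmaxQ Q = {a}"
proof -
  have "b \<in> argmaxQ Q \<longleftrightarrow> b = a" for b
    using assms by (cases a; cases b) (auto simp: argmaxQ_def all_bool_eq)
  then show ?thesis
    by blast
qed

lemma pihat_greedy:
  assumes "Q (\<not> a) < Q a"
  shows "pihat 0 Q b = (if b = a then 1 else 0)"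
  by (simp add: pihat_def argmaxQ_eq_singleton[OF assms])

lemma V_greedy:
  assumes "Q (\<not> a) < Q a" and "\<bar>\<gamma>\<bar> < 1"
  shows "V \<gamma> (pihat 0 Q) = rew a / (1 - \<gamma>)"
  by (rule V_deterministic[OF _ assms(2)]) (simp add: pihat_greedy[OF assms(1)] rew_def)

lemma not_convergent_if_dist_Suc_ge:
  fixes X :: "nat \<Rightarrow> 'a :: metric_space"
  assumes "0 < e" and "\<And>n. e \<le> dist (X n) (X (Suc n))"
  shows "\<not> convergent X"
proof
  assume "convergent X"
  then obtain N where "\<And>m n. N \<le> m \<Longrightarrow> N \<le> n \<Longrightarrow> dist (X m) (X n) < e"
    using convergent_Cauchy metric_CauchyD assms(1) by metis
  then have "dist (X N) (X (Suc N)) < e" by simp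
  with assms(2)[of N] show False by simp
qed

lemma not_summable_if_pair_sums_harmonic:
  fixes f :: "nat \<Rightarrow> real"
  assumes "0 < c" and "\<And>k. c / real (k + n) \<le> f k + f (Suc k)"
  shows "\<not> summable f"
proof
  assume "summable f"
  then have "summable (\<lambda>k. f k + f (Suc k))"
    by (intro summable_add) (simp_all add: summable_Suc_iff)
  then have "summable (\<lambda>k. c / real (k + n))"
    by (rule summable_comparison_test') (use assms in auto)
  then have "summable (\<lambda>k. inverse c * (c / real (k + n)))"
    by (rule summable_mult)
  then have "summable (\<lambda>k. inverse (real (k + n)))"
    using assms(1) by (simp add: field_simps)
  then show False
    using summable_iff_shift[of "\<lambda>k. inverse (real k)" n] not_summable_harmonic[where 'a=real]
    by simp
qed

lemma summable_square_if_harmonic_bound: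
  fixes f :: "nat \<Rightarrow> real"
  assumes "0 < n" and "\<And>k. \<bar>f k\<bar> \<le> C / real (k + n)"
  shows "summable (\<lambda>k. (f k)\<^sup>2)"
proof -
  have "summable (\<lambda>k. inverse (real (k + n) ^ 2))"
    using summable_iff_shift[of "\<lambda>k. inverse (real k ^ 2)" n] inverse_power_summable[of 2] by simp
  then have majorant: "summable (\<lambda>k. C\<^sup>2 * inverse (real (k + n) ^ 2))"
    by (rule summable_mult)
  have bound: "norm ((f k)\<^sup>2) \<le> C\<^sup>2 * inverse (real (k + n) ^ 2)" for k
  proof -
    have "\<bar>f k\<bar>\<^sup>2 \<le> (C / real (k + n))\<^sup>2"
      using assms(2)[of k] by (intro power_mono) auto
    then show ?thesis by (simp add: divide_inverse power_mult_distrib power_inverse)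
  qed
  show ?thesis
    by (rule summable_comparison_test'[OF majorant, of 0]) (rule bound)
qed

lemma sums_geometric_after_head:
  fixes \<gamma> :: real
  assumes "\<bar>\<gamma>\<bar> < 1"
  shows "(\<lambda>t. \<gamma> ^ t * (if t = 0 then x else y)) sums (x + \<gamma> * y / (1 - \<gamma>))"
proof -
  have "(\<lambda>t. (\<gamma> * y) * \<gamma> ^ t) sums ((\<gamma> * y) * (1 / (1 - \<gamma>)))"
    using assms by (intro sums_mult geometric_sums) simp
  then have "(\<lambda>t. \<gamma> ^ Suc t * (if Suc t = 0 then x else y)) sums (\<gamma> * y / (1 - \<gamma>))"
    by (simp add: mult_ac)
  then show ?thesis
    by (subst (asm) sums_Suc_iff) (simp add: add.commute)
qed

(* Episode k+1 first takes action odd k, which is not greedy for Q^k, and then the greedy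
   action even k forever. *)
definition cex_action :: "nat \<Rightarrow> nat \<Rightarrow> 'w \<Rightarrow> bool" where
  "cex_action i t \<omega> = (if t = 0 then even i else odd i)"

definition cex_reward :: "nat \<Rightarrow> nat \<Rightarrow> 'w \<Rightarrow> real" where
  "cex_reward i t \<omega> = (if t = 0 then 0 else rew (cex_action i (t - 1) \<omega>))"

lemma hits_cex: "hits cex_action (Suc k) a \<omega>"
  unfolding hits_def cex_action_def by (rule exI[of _ "if a = odd k then 0 else 1"]) auto

lemma visit_cex [simp]: "visit cex_action (Suc k) a \<omega> = 1"
  by (simp add: visit_def hits_cex)

lemma tau_cex: "tau cex_action (Suc k) a \<omega> = (if a = odd k then 0 else 1)"
  unfolding tau_def cex_action_def by (rule Least_equality) (auto split: if_splits)

lemma Gret_cex: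
  assumes "\<bar>\<gamma>\<bar> < 1"
  shows "Gret cex_action cex_reward \<gamma> (Suc k) a \<omega> =
    (if a = odd k then rew a + \<gamma> * rew (\<not> a) / (1 - \<gamma>) else rew a / (1 - \<gamma>))"
proof (cases "a = odd k")
  case True
  have "(\<lambda>t. \<gamma> ^ t * cex_reward (Suc k) (t + 1) \<omega>)
      = (\<lambda>t. \<gamma> ^ t * (if t = 0 then rew a else rew (\<not> a)))"
    using True by (auto simp: cex_reward_def cex_action_def)
  then show ?thesis
    using True sums_geometric_after_head[OF assms]
    by (simp add: Gret_def hits_cex tau_cex sums_iff)
next
  case False
  have "(\<lambda>t. \<gamma> ^ t * cex_reward (Suc k) (Suc (t + 1)) \<omega>) = (\<lambda>t. \<gamma> ^ t * rew a)"
    using False by (auto simp: cex_reward_def cex_action_def)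
  then show ?thesis
    using False assms
    by (simp add: Gret_def hits_cex tau_cex suminf_mult2[symmetric] suminf_geometric
        summable_geometric)
qed

(* Positive because gamma > 1/2: the return gamma/(1-gamma) of action 0 in an even episode
   then exceeds Q(1) = 1. *)
definition cex_gap :: "real \<Rightarrow> real" where
  "cex_gap \<gamma> = min 1 (\<gamma> / (1 - \<gamma>) - 1)"

definition cex_offset :: "real \<Rightarrow> nat \<Rightarrow> real" where
  "cex_offset \<gamma> k = cex_gap \<gamma> / real (Suc k)"

definition cex_target :: "real \<Rightarrow> nat \<Rightarrow> real" where
  "cex_target \<gamma> k = (if even k then 1 - cex_offset \<gamma> k else 1 + cex_offset \<gamma> k)"

(* The return of action 0 in episode k+1, cf. Gret_cex. *)
definition cex_return :: "real \<Rightarrow> nat \<Rightarrow> real" where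
  "cex_return \<gamma> k = (if even k then \<gamma> / (1 - \<gamma>) else 0)"

definition cex_rate0 :: "real \<Rightarrow> nat \<Rightarrow> real" where
  "cex_rate0 \<gamma> k = (cex_target \<gamma> (Suc k) - cex_target \<gamma> k) / (cex_return \<gamma> k - cex_target \<gamma> k)"

(* Action 1 is updated only in odd episodes, where its return 1 equals its estimate. *)
definition cex_rate :: "real \<Rightarrow> nat \<Rightarrow> bool \<Rightarrow> 'w \<Rightarrow> real" where
  "cex_rate \<gamma> k a \<omega> = (if a then (if odd k then 1 / real (Suc k) else 0) else cex_rate0 \<gamma> k)"

definition cex_Q0 :: "real \<Rightarrow> bool \<Rightarrow> real" where
  "cex_Q0 \<gamma> a = (if a then 1 else cex_target \<gamma> 0)"

definition cex_start :: "nat \<Rightarrow> 'w \<Rightarrow> real" where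
  "cex_start k \<omega> = (if odd k then 1 else 0)"

abbreviation cex_Q :: "real \<Rightarrow> nat \<Rightarrow> 'w \<Rightarrow> bool \<Rightarrow> real" where
  "cex_Q \<gamma> \<equiv> Qhat (cex_Q0 \<gamma>) (cex_rate \<gamma>) cex_action cex_reward \<gamma>"

lemma cex_rate0_eq:
  "cex_rate0 \<gamma> k = (cex_offset \<gamma> k + cex_offset \<gamma> (Suc k))
     / ((if even k then \<gamma> / (1 - \<gamma>) - 1 else 1) + cex_offset \<gamma> k)"
proof (cases "even k")
  case True
  then show ?thesis
    by (simp add: cex_rate0_def cex_target_def cex_return_def algebra_simps)
next
  case False
  then have "cex_rate0 \<gamma> k = (- (cex_offset \<gamma> k + cex_offset \<gamma> (Suc k)))
      / (- (1 + cex_offset \<gamma> k))"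
    by (simp add: cex_rate0_def cex_target_def cex_return_def algebra_simps)
  then show ?thesis
    using False by (simp only: minus_divide_divide if_False)
qed

context
  fixes \<gamma> :: real
  assumes gamma: "1/2 < \<gamma>" "\<gamma> < 1"
begin

lemma cex_gap_bounds:
  shows "0 < cex_gap \<gamma>" "cex_gap \<gamma> \<le> 1" "cex_gap \<gamma> \<le> \<gamma> / (1 - \<gamma>) - 1"
proof -
  have "1 < \<gamma> / (1 - \<gamma>)"
    using gamma by (simp add: field_simps)
  then show "0 < cex_gap \<gamma>" "cex_gap \<gamma> \<le> 1" "cex_gap \<gamma> \<le> \<gamma> / (1 - \<gamma>) - 1"
    by (auto simp: cex_gap_def)
qed

lemma cex_offset_pos:
  shows "0 < cex_offset \<gamma> k"
  using cex_gap_bounds by (simp add: cex_offset_def)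

lemma cex_rate0_bounds:
  shows "0 \<le> cex_rate0 \<gamma> k" "cex_rate0 \<gamma> k \<le> 1" "cex_rate0 \<gamma> k \<le> 2 / real (Suc k)"
    "cex_gap \<gamma> * (1 - \<gamma>) / real (Suc k) \<le> cex_rate0 \<gamma> k"
proof -
  define m where "m = cex_gap \<gamma>"
  define h where "h = cex_offset \<gamma> k"
  define h' where "h' = cex_offset \<gamma> (Suc k)"
  define D where "D = (if even k then \<gamma> / (1 - \<gamma>) - 1 else 1)"
  have rate: "cex_rate0 \<gamma> k = (h + h') / (D + h)"
    by (simp add: cex_rate0_eq h_def h'_def D_def)
  have m: "0 < m" "m \<le> 1" "m \<le> \<gamma> / (1 - \<gamma>) - 1"
    using cex_gap_bounds by (simp_all add: m_def)
  have h_eq: "h = m / real (Suc k)" "h' = m / real (Suc (Suc k))"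
    by (simp_all add: h_def h'_def m_def cex_offset_def)
  have h: "0 < h'" "h' \<le> h" "h \<le> m"
    using m unfolding h_eq by (simp, (intro divide_left_mono; simp), simp add: divide_le_eq)
  have D: "m \<le> D" "D + h \<le> \<gamma> / (1 - \<gamma>) + 1"
    using m h by (auto simp: D_def)
  have pos: "0 < D + h"
    using m h D by linarith
  show "0 \<le> cex_rate0 \<gamma> k"
    using h pos by (simp add: rate)
  show "cex_rate0 \<gamma> k \<le> 1"
    using h m D pos by (simp add: rate)
  have "(h + h') / (D + h) \<le> 2 * h / m"
    using h m D pos by (intro frac_le) auto
  also have "\<dots> = 2 / real (Suc k)"
    using m by (simp add: h_eq)
  finally show "cex_rate0 \<gamma> k \<le> 2 / real (Suc k)"
    by (simp add: rate)
  have "\<gamma> / (1 - \<gamma>) + 1 = 1 / (1 - \<gamma>)"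
    using gamma by (simp add: field_simps)
  then have "m * (1 - \<gamma>) / real (Suc k) = h / (\<gamma> / (1 - \<gamma>) + 1)"
    by (simp add: h_eq)
  also have "\<dots> \<le> (h + h') / (D + h)"
    using h m D pos by (intro frac_le) auto
  finally show "cex_gap \<gamma> * (1 - \<gamma>) / real (Suc k) \<le> cex_rate0 \<gamma> k"
    by (simp add: rate m_def)
qed

lemma Qhat_cex:
  shows "cex_Q \<gamma> k \<omega> = (\<lambda>a. if a then 1 else cex_target \<gamma> k)"
proof (induction k)
  case 0
  show ?case
    by (auto simp: cex_Q0_def)
next
  case (Suc k)
  have "cex_return \<gamma> k - cex_target \<gamma> k \<noteq> 0"
    using cex_gap_bounds cex_offset_pos[of k] by (auto simp: cex_return_def cex_target_def)
  then have step: "(1 - cex_rate0 \<gamma> k) * cex_target \<gamma> k + cex_rate0 \<gamma> k * cex_return \<gamma> k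
      = cex_target \<gamma> (Suc k)"
    by (simp add: cex_rate0_def algebra_simps) (simp add: field_simps)
  have "\<bar>\<gamma>\<bar> < 1"
    using gamma by simp
  then show ?case
    unfolding Qhat.simps Suc.IH using step
    by (intro ext) (auto simp: Gret_cex cex_rate_def cex_return_def rew_def)
qed

lemma Qhat_cex_greedy:
  shows "cex_Q \<gamma> k \<omega> (\<not> even k)
    < cex_Q \<gamma> k \<omega> (even k)"
  using cex_offset_pos[of k] by (simp add: Qhat_cex cex_target_def)

lemma V_cex:
  shows "V \<gamma> (pihat 0 (cex_Q \<gamma> k \<omega>)) = rew (even k) / (1 - \<gamma>)"
  using gamma by (intro V_greedy Qhat_cex_greedy) auto

lemma cex_rate_not_summable:
  shows "\<not> summable (\<lambda>k. cex_rate \<gamma> (Suc k) a \<omega>)"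
proof (cases a)
  case True
  show ?thesis
    by (rule not_summable_if_pair_sums_harmonic[where c=1 and n=3])
      (auto simp: True cex_rate_def frac_le)
next
  case False
  show ?thesis
  proof (rule not_summable_if_pair_sums_harmonic[where n=2])
    show "0 < cex_gap \<gamma> * (1 - \<gamma>)"
      using cex_gap_bounds gamma by simp
    fix k
    have "cex_gap \<gamma> * (1 - \<gamma>) / real (k + 2) \<le> cex_rate0 \<gamma> (Suc k)"
      using cex_rate0_bounds(4)[of "Suc k"] by simp
    also have "\<dots> \<le> cex_rate0 \<gamma> (Suc k) + cex_rate0 \<gamma> (Suc (Suc k))"
      using cex_rate0_bounds(1) by simp
    finally show "cex_gap \<gamma> * (1 - \<gamma>) / real (k + 2)
        \<le> cex_rate \<gamma> (Suc k) a \<omega> + cex_rate \<gamma> (Suc (Suc k)) a \<omega>"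
      by (simp add: False cex_rate_def)
  qed
qed

lemma cex_rate_square_summable:
  shows "summable (\<lambda>k. (cex_rate \<gamma> (Suc k) a \<omega>)\<^sup>2)"
proof (rule summable_square_if_harmonic_bound[where C=2 and n=2])
  fix k
  show "\<bar>cex_rate \<gamma> (Suc k) a \<omega>\<bar> \<le> 2 / real (k + 2)"
    using cex_rate0_bounds[of "Suc k"]
    by (auto simp: cex_rate_def frac_le)
qed simp

lemma algorithm1_cex:
  shows "algorithm1 (return (count_space UNIV) \<omega>\<^sub>0) cex_action cex_reward \<gamma> (cex_Q0 \<gamma>) cex_start
    (cex_rate \<gamma>) (\<lambda>k \<omega>. 0)" (is "algorithm1 ?M _ _ _ _ _ _ _")
  unfolding algorithm1_def
proof (intro conjI allI impI ballI)
  show "prob_space ?M"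
    by (rule prob_space_return) simp
next
  fix k a \<omega>
  show "0 \<le> cex_rate \<gamma> k a \<omega>" "cex_rate \<gamma> k a \<omega> \<le> 1"
    using cex_rate0_bounds[of k] by (auto simp: cex_rate_def)
next
  fix k b E
  show "measure ?M (E \<inter> {\<omega> \<in> space ?M. cex_action (Suc k) 0 \<omega> = b})
      = (\<integral>\<omega>. indicator E \<omega> * (if b then cex_start k \<omega> else 1 - cex_start k \<omega>) \<partial>?M)"
    by (cases "odd k = b") (auto simp: cex_action_def cex_start_def)
next
  fix k b E and t :: nat
  assume "1 \<le> t"
  have greedy: "pihat 0 (cex_Q \<gamma> k \<omega>) c = (if c = even k then 1 else 0)" for \<omega> c
    by (rule pihat_greedy[OF Qhat_cex_greedy])
  show "measure ?M (E \<inter> {\<omega> \<in> space ?M. cex_action (Suc k) t \<omega> = b})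
      = (\<integral>\<omega>. indicator E \<omega> * pihat 0 (cex_Q \<gamma> k \<omega>) b \<partial>?M)"
    using \<open>1 \<le> t\<close> by (cases "even k = b") (auto simp: cex_action_def greedy)
qed (auto simp: cex_action_def cex_reward_def cex_start_def[abs_def] cex_rate_def[abs_def]
    hits_cex tau_cex)

end

theorem proposition2p4:
  fixes \<gamma> :: real
  assumes "1/2 < \<gamma>" and "\<gamma> < 1"
  shows "\<exists>(M :: (nat \<Rightarrow> real) measure) A R Q0 p \<alpha>.
           algorithm1 M A R \<gamma> Q0 p \<alpha> (\<lambda>k \<omega>. 0)
         \<and> (AE \<omega> in M.
              (\<forall>a. \<not> summable (\<lambda>k. \<alpha> (Suc k) a \<omega> * visit A (Suc (Suc k)) a \<omega>)
                 \<and> summable (\<lambda>k. (\<alpha> (Suc k) a \<omega>)\<^sup>2 * visit A (Suc (Suc k)) a \<omega>))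
            \<and> \<not> convergent (\<lambda>k. V \<gamma> (pihat 0 (Qhat Q0 \<alpha> A R \<gamma> k \<omega>))))"
proof -
  have not_convergent: "\<not> convergent (\<lambda>k. V \<gamma> (pihat 0 (cex_Q \<gamma> k \<omega>)))" for \<omega>
  proof (rule not_convergent_if_dist_Suc_ge)
    show "0 < 1 / (1 - \<gamma>)"
      using assms by simp
    show "1 / (1 - \<gamma>)
        \<le> dist (V \<gamma> (pihat 0 (cex_Q \<gamma> k \<omega>))) (V \<gamma> (pihat 0 (cex_Q \<gamma> (Suc k) \<omega>)))" for k
      using assms by (simp add: V_cex[OF assms] dist_real_def rew_def)
  qed
  have ae: "AE \<omega> in return (count_space UNIV) (\<lambda>_. 0).
      (\<forall>a. \<not> summable (\<lambda>k. cex_rate \<gamma> (Suc k) a \<omega> * visit cex_action (Suc (Suc k)) a \<omega>)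
         \<and> summable (\<lambda>k. (cex_rate \<gamma> (Suc k) a \<omega>)\<^sup>2 * visit cex_action (Suc (Suc k)) a \<omega>))
      \<and> \<not> convergent (\<lambda>k. V \<gamma> (pihat 0 (cex_Q \<gamma> k \<omega>)))"
    by (rule AE_I2)
      (simp add: cex_rate_not_summable[OF assms] cex_rate_square_summable[OF assms] not_convergent)
  show ?thesis
    by (intro exI conjI, rule algorithm1_cex[OF assms], rule ae)
qed

end
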